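(* For all $n\ge0$, $$r_n=2^n+\sum_{k=1}^{n-1}2^k\,c(n,k),$$ where $c(n,k)$ denotes the number of Young diagrams fitting in the staircase shape $(n,n-1,\dots,1)$ that have exactly $k$ corners $(i,j)$ with $i+j<n+1$.
   Context: The (large) Schröder numbers are defined by $r_0=1$ and $r_n=r_{n-1}+\sum_{i=0}^{n-1}r_ir_{n-1-i}$ for $n\ge1$. Young diagrams are in English notation: the diagram of a partition $\lambda$ is the set of cells $(i,j)$ with $1\le j\le\lambda_i$; it fits in $(n,n-1,\dots,1)$ if $\lambda_i\le n+1-i$ for all $i$. A corner is a cell $(i,j)$ of the diagram such that neither $(i+1,j)$ nor $(i,j+1)$ belongs to the diagram. (For $n=0$ and $n=1$ the sum is empty.) *)

theory Defs
  imports Main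
begin

fun schroeder :: "nat \<Rightarrow> nat" where
  "schroeder 0 = 1"
| "schroeder (Suc m) = schroeder m + (\<Sum>i\<le>m. schroeder i * schroeder (m - i))"

text \<open>A partition is a list of positive, weakly decreasing parts; lam ! (i-1) is the
  i-th part lambda_i (rows indexed from 1).\<close>
definition is_partition :: "nat list \<Rightarrow> bool" where
  "is_partition lam \<longleftrightarrow> sorted_wrt (\<ge>) lam \<and> (\<forall>x\<in>set lam. 0 < x)"

definition young_diagram :: "nat list \<Rightarrow> (nat \<times> nat) set" where
  "young_diagram lam = {(i, j). 1 \<le> i \<and> i \<le> length lam \<and> 1 \<le> j \<and> j \<le> lam ! (i - 1)}"

definition fits_staircase :: "nat \<Rightarrow> nat list \<Rightarrow> bool" where
  "fits_staircase n lam \<longleftrightarrow> is_partition lam \<and>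
     (\<forall>i. 1 \<le> i \<and> i \<le> length lam \<longrightarrow> int (lam ! (i - 1)) \<le> int n + 1 - int i)"

definition corners :: "nat list \<Rightarrow> (nat \<times> nat) set" where
  "corners lam = {(i, j) \<in> young_diagram lam.
      (i + 1, j) \<notin> young_diagram lam \<and> (i, j + 1) \<notin> young_diagram lam}"

definition c_count :: "nat \<Rightarrow> nat \<Rightarrow> nat" where
  "c_count n k = card {lam. fits_staircase n lam \<and>
      card {(i, j) \<in> corners lam. i + j < n + 1} = k}"

end

theory Submission
  imports Defs
begin

(* Weight a diagram in the staircase (n, ..., 1) by x ^ (number of its inner corners) and let
   W_x(n, b) be the total weight of the diagrams whose first part is at most b.  Deleting the
   first row maps the diagrams with first part a bijectively onto the diagrams in the staircase
   (n - 1, ..., 1) with first part at most a, and the first row carries an inner corner exactly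
   when a < n and the second part is smaller than a.  For x = 2 this turns W_2 into a count of
   Schroeder lattice paths, W(n+1, b+1) = W(n+1, b) + W(n, b) + W(n, b+1) below the diagonal,
   and splitting such a path at its last diagonal point gives Schroeder's recurrence for W(n, n).
   For x = 0 only diagrams without inner corners count, and W_0(n, n) doubles with n. *)

(* P n b, for b \<le> n, counts the paths from (0, 0) to (n, b) with steps (1, 0), (0, 1), (1, 1)
   that never rise above the diagonal. *)
locale schroeder_grid =
  fixes P :: "nat \<Rightarrow> nat \<Rightarrow> nat"
  assumes P_0: "P n 0 = 1"
    and P_Suc_Suc: "c < m \<Longrightarrow> P (Suc m) (Suc c) = P (Suc m) c + P m c + P m (Suc c)"
    and P_diag: "P (Suc m) (Suc m) = P (Suc m) m + P m m"
begin

(* (k, k) is the last diagonal point of the path, so the rest of it starts with a step (1, 0). *)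
definition last_diagonal_sum :: "nat \<Rightarrow> nat \<Rightarrow> nat" where
  "last_diagonal_sum n b = (\<Sum>k\<le>b. P k k * P (n - 1 - k) (b - k))"

lemma last_diagonal_sum_0: "last_diagonal_sum n 0 = 1"
  by (simp add: last_diagonal_sum_def P_0)

lemma last_diagonal_sum_Suc_Suc:
  assumes "c < m"
  shows "last_diagonal_sum (Suc m) (Suc c) = last_diagonal_sum (Suc m) c + last_diagonal_sum m c
    + (if Suc c < m then last_diagonal_sum m (Suc c) else P m m)"
proof -
  have split: "last_diagonal_sum (Suc m) (Suc c) =
      (\<Sum>k\<le>c. P k k * P (m - k) (Suc c - k)) + P (Suc c) (Suc c)"
    by (simp add: last_diagonal_sum_def P_0 Suc_diff_le)
  show ?thesis
  proof (cases "Suc c < m")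
    case True
    have "P (m - k) (Suc c - k) = P (m - k) (c - k) + P (m - 1 - k) (c - k) + P (m - 1 - k) (Suc c - k)"
      if "k \<le> c" for k
      using P_Suc_Suc[of "c - k" "m - 1 - k"] that True
      by (simp add: Suc_diff_le Suc_diff_Suc)
    then have "(\<Sum>k\<le>c. P k k * P (m - k) (Suc c - k)) = last_diagonal_sum (Suc m) c
        + last_diagonal_sum m c + (\<Sum>k\<le>c. P k k * P (m - 1 - k) (Suc c - k))"
      by (simp add: last_diagonal_sum_def algebra_simps sum.distrib)
    moreover have "last_diagonal_sum m (Suc c) =
        (\<Sum>k\<le>c. P k k * P (m - 1 - k) (Suc c - k)) + P (Suc c) (Suc c)"
      by (simp add: last_diagonal_sum_def P_0)
    ultimately show ?thesis using True split by simp
  next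
    case False
    with assms have m: "m = Suc c" by simp
    have "P (m - k) (Suc c - k) = P (m - k) (c - k) + P (m - 1 - k) (c - k)"
      if "k \<le> c" for k
      using P_diag[of "c - k"] that m by (simp add: Suc_diff_le)
    then have "(\<Sum>k\<le>c. P k k * P (m - k) (Suc c - k)) =
        last_diagonal_sum (Suc m) c + last_diagonal_sum m c"
      by (simp add: last_diagonal_sum_def algebra_simps sum.distrib)
    then show ?thesis using False split m by simp
  qed
qed

lemma eq_last_diagonal_sum: "b < n \<Longrightarrow> P n b = last_diagonal_sum n b"
proof (induction n arbitrary: b)
  case (Suc m)
  note outer_IH = Suc.IH
  from \<open>b < Suc m\<close> show ?case
  proof (induction b)
    case (Suc c)
    then have "c < m" by simp
    moreover have "P m (Suc c) = (if Suc c < m then last_diagonal_sum m (Suc c) else P m m)"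
      using outer_IH \<open>c < m\<close> by (cases "Suc c = m") auto
    ultimately show ?case
      using Suc outer_IH by (simp add: P_Suc_Suc last_diagonal_sum_Suc_Suc)
  qed (simp add: P_0 last_diagonal_sum_0)
qed simp

lemma diag_eq_schroeder: "P n n = schroeder n"
proof (induction n rule: less_induct)
  case (less n)
  show ?case
  proof (cases n)
    case (Suc m)
    have "P (Suc m) m = (\<Sum>k\<le>m. P k k * P (m - k) (m - k))"
      by (simp add: eq_last_diagonal_sum last_diagonal_sum_def)
    also have "\<dots> = (\<Sum>k\<le>m. schroeder k * schroeder (m - k))"
      using less Suc by (intro sum.cong) auto
    finally show ?thesis
      using less Suc by (simp add: P_diag)
  qed (simp add: P_0)
qed

end

lemma is_partition_Cons:
  "is_partition (a # mu) \<longleftrightarrow> 0 < a \<and> (mu = [] \<or> hd mu \<le> a) \<and> is_partition mu"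
  by (cases mu) (auto simp: is_partition_def)

lemma fits_staircase_iff:
  "fits_staircase n lam \<longleftrightarrow> is_partition lam \<and> (\<forall>k<length lam. lam ! k + k \<le> n)"
proof -
  have "(\<forall>i. 1 \<le> i \<and> i \<le> length lam \<longrightarrow> int (lam ! (i - 1)) \<le> int n + 1 - int i)
      \<longleftrightarrow> (\<forall>k<length lam. lam ! k + k \<le> n)"
  proof safe
    fix k assume "\<forall>i. 1 \<le> i \<and> i \<le> length lam \<longrightarrow> int (lam ! (i - 1)) \<le> int n + 1 - int i"
      and "k < length lam"
    then show "lam ! k + k \<le> n" by (auto dest: spec[of _ "Suc k"])
  next
    fix i assume "\<forall>k<length lam. lam ! k + k \<le> n" "1 \<le> i" "i \<le> length lam"
    then show "int (lam ! (i - 1)) \<le> int n + 1 - int i" by (auto dest: spec[of _ "i - 1"])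
  qed
  then show ?thesis unfolding fits_staircase_def by blast
qed

lemma fits_staircase_Nil: "fits_staircase n []"
  by (simp add: fits_staircase_def is_partition_def)

lemma fits_staircase_Cons:
  "fits_staircase n (a # mu) \<longleftrightarrow>
     0 < a \<and> a \<le> n \<and> (mu = [] \<or> hd mu \<le> a) \<and> fits_staircase (n - 1) mu"
  by (cases n) (auto simp: fits_staircase_iff is_partition_Cons All_less_Suc2)

lemma fits_staircase_length_set:
  "fits_staircase n lam \<Longrightarrow> length lam \<le> n \<and> set lam \<subseteq> {..n}"
proof (induction lam arbitrary: n)
  case (Cons a mu)
  then have "length mu \<le> n - 1 \<and> set mu \<subseteq> {..n - 1}" "0 < a" "a \<le> n"
    by (simp_all add: fits_staircase_Cons)
  then show ?case by auto
qed simp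

lemma finite_fits_staircase: "finite {lam. fits_staircase n lam}"
  by (rule finite_subset[OF _ finite_lists_length_le[of "{..n}" n]])
     (auto dest: fits_staircase_length_set)

lemma fits_staircase_hd: "fits_staircase n lam \<Longrightarrow> lam \<noteq> [] \<Longrightarrow> 0 < hd lam \<and> hd lam \<le> n"
  by (cases lam) (auto simp: fits_staircase_Cons)

lemma mem_young_diagram_Cons:
  "(i, j) \<in> young_diagram (a # mu) \<longleftrightarrow>
     1 \<le> j \<and> (i = 1 \<and> j \<le> a \<or> 2 \<le> i \<and> (i - 1, j) \<in> young_diagram mu)"
  by (cases i) (auto simp: young_diagram_def nth_Cons split: nat.split)

lemma finite_young_diagram: "finite (young_diagram lam)"
proof (rule finite_subset)
  have "lam ! (i - 1) \<le> sum_list lam" if "1 \<le> i" "i \<le> length lam" for i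
    using that by (intro member_le_sum_list) auto
  then show "young_diagram lam \<subseteq> {1..length lam} \<times> {1..sum_list lam}"
    by (fastforce simp: young_diagram_def)
qed simp

lemma corners_Cons:
  assumes "0 < a"
  shows "corners (a # mu) =
    (if mu = [] \<or> hd mu < a then {(1, a)} else {}) \<union> (\<lambda>(i, j). (Suc i, j)) ` corners mu"
proof -
  have row1: "(1, j) \<in> corners (a # mu) \<longleftrightarrow> j = a \<and> (mu = [] \<or> hd mu < a)" for j
    using assms by (cases mu) (auto simp: corners_def mem_young_diagram_Cons young_diagram_def)
  have row_Suc: "(Suc i, j) \<in> corners (a # mu) \<longleftrightarrow> (i, j) \<in> corners mu" if "1 \<le> i" for i j
    using that by (auto simp: corners_def mem_young_diagram_Cons young_diagram_def)
  have row0: "(0, j) \<notin> corners lam" for j lam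
    by (simp add: corners_def young_diagram_def)
  have shift: "(Suc i, j) \<in> (\<lambda>(i, j). (Suc i, j)) ` A \<longleftrightarrow> (i, j) \<in> A" for i j A
    by force
  show ?thesis
  proof (intro set_eqI)
    fix p :: "nat \<times> nat"
    obtain i j where p: "p = (i, j)" by fastforce
    consider "i = 0" | "i = 1" | k where "i = Suc k" "1 \<le> k"
      by (metis One_nat_def less_one not0_implies_Suc not_less)
    then show "p \<in> corners (a # mu) \<longleftrightarrow>
        p \<in> (if mu = [] \<or> hd mu < a then {(1, a)} else {}) \<union> (\<lambda>(i, j). (Suc i, j)) ` corners mu"
      by cases (use row0 row1 row_Suc in \<open>auto simp: p shift\<close>)
  qed
qed

definition inner_corners :: "nat \<Rightarrow> nat list \<Rightarrow> (nat \<times> nat) set" where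
  "inner_corners n lam = {(i, j) \<in> corners lam. i + j < n + 1}"

lemma inner_corners_Nil: "inner_corners n [] = {}"
  by (simp add: inner_corners_def corners_def young_diagram_def)

lemma finite_inner_corners: "finite (inner_corners n lam)"
  by (rule finite_subset[OF _ finite_young_diagram]) (auto simp: inner_corners_def corners_def)

lemma card_inner_corners_Cons:
  assumes "0 < a"
  shows "card (inner_corners (Suc m) (a # mu)) =
    (if a < Suc m \<and> (mu = [] \<or> hd mu < a) then 1 else 0) + card (inner_corners m mu)"
proof -
  have "inner_corners (Suc m) (a # mu) =
      (if a < Suc m \<and> (mu = [] \<or> hd mu < a) then {(1, a)} else {})
      \<union> (\<lambda>(i, j). (Suc i, j)) ` inner_corners m mu"
    using assms by (auto simp: inner_corners_def corners_Cons)
  moreover have "(1, a) \<notin> (\<lambda>(i, j). (Suc i, j)) ` inner_corners m mu"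
    by (auto simp: inner_corners_def corners_def young_diagram_def)
  moreover have "inj_on (\<lambda>(i, j). (Suc i, j)) (inner_corners m mu)"
    by (auto simp: inj_on_def)
  ultimately show ?thesis
    by (simp add: card_image finite_inner_corners)
qed

lemma card_inner_corners_le:
  "fits_staircase n lam \<Longrightarrow> card (inner_corners n lam) \<le> n - 1"
proof (induction lam arbitrary: n)
  case Nil
  then show ?case by (simp add: inner_corners_Nil)
next
  case (Cons a mu)
  then have "0 < a" "a \<le> n" "fits_staircase (n - 1) mu"
    by (simp_all add: fits_staircase_Cons)
  then obtain m where n: "n = Suc m" and fits: "0 < a" "a \<le> n" "fits_staircase m mu"
    by (cases n) auto
  moreover from Cons.IH fits have "card (inner_corners m mu) \<le> m - 1" by simp
  ultimately show ?case by (cases m) (auto simp: card_inner_corners_Cons)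
qed

definition corner_weight_le :: "nat \<Rightarrow> nat \<Rightarrow> nat \<Rightarrow> nat" where
  "corner_weight_le x n b =
    (\<Sum>lam | fits_staircase n lam \<and> (lam = [] \<or> hd lam \<le> b). x ^ card (inner_corners n lam))"

definition corner_weight_eq :: "nat \<Rightarrow> nat \<Rightarrow> nat \<Rightarrow> nat" where
  "corner_weight_eq x n a =
    (\<Sum>lam | fits_staircase n lam \<and> lam \<noteq> [] \<and> hd lam = a. x ^ card (inner_corners n lam))"

lemma corner_weight_le_0: "corner_weight_le x n 0 = 1"
proof -
  have "{lam. fits_staircase n lam \<and> (lam = [] \<or> hd lam \<le> 0)} = {[]}"
    using fits_staircase_Nil by (auto dest: fits_staircase_hd)
  then show ?thesis by (simp add: corner_weight_le_def inner_corners_Nil)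
qed

lemma corner_weight_le_Suc:
  "corner_weight_le x n (Suc c) = corner_weight_le x n c + corner_weight_eq x n (Suc c)"
proof -
  let ?A = "{lam. fits_staircase n lam \<and> (lam = [] \<or> hd lam \<le> c)}"
  let ?B = "{lam. fits_staircase n lam \<and> lam \<noteq> [] \<and> hd lam = Suc c}"
  have "{lam. fits_staircase n lam \<and> (lam = [] \<or> hd lam \<le> Suc c)} = ?A \<union> ?B"
    by (auto simp: le_Suc_eq)
  moreover have "?A \<inter> ?B = {}"
    by auto
  moreover have "finite ?A" "finite ?B"
    by (simp_all add: finite_fits_staircase)
  ultimately show ?thesis unfolding corner_weight_le_def corner_weight_eq_def
    by (simp add: sum.union_disjoint)
qed

lemma corner_weight_eq_beyond:
  assumes "n < a"
  shows "corner_weight_eq x n a = 0"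
proof -
  have "{lam. fits_staircase n lam \<and> lam \<noteq> [] \<and> hd lam = a} = {}"
    using assms fits_staircase_hd by fastforce
  then show ?thesis unfolding corner_weight_eq_def by (simp only: sum.empty)
qed

lemma corner_weight_le_self:
  "corner_weight_le x n n = (\<Sum>lam | fits_staircase n lam. x ^ card (inner_corners n lam))"
proof -
  have "{lam. fits_staircase n lam \<and> (lam = [] \<or> hd lam \<le> n)} = {lam. fits_staircase n lam}"
    by (auto dest: fits_staircase_hd)
  then show ?thesis by (simp add: corner_weight_le_def)
qed

lemma corner_weight_eq_Suc_Suc:
  assumes "c \<le> m"
  shows "corner_weight_eq x (Suc m) (Suc c) =
    (if c < m then x else 1) * corner_weight_le x m c + corner_weight_eq x m (Suc c)"
proof -
  define w where "w mu = x ^ card (inner_corners m mu)" for mu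
  let ?A = "{mu. fits_staircase m mu \<and> (mu = [] \<or> hd mu \<le> c)}"
  let ?B = "{mu. fits_staircase m mu \<and> mu \<noteq> [] \<and> hd mu = Suc c}"
  have first_row: "{lam. fits_staircase (Suc m) lam \<and> lam \<noteq> [] \<and> hd lam = Suc c} =
      (#) (Suc c) ` (?A \<union> ?B)"
  proof (rule set_eqI)
    fix lam
    show "lam \<in> {lam. fits_staircase (Suc m) lam \<and> lam \<noteq> [] \<and> hd lam = Suc c} \<longleftrightarrow>
        lam \<in> (#) (Suc c) ` (?A \<union> ?B)"
      using assms by (cases lam) (auto simp: fits_staircase_Cons)
  qed
  have weight: "x ^ card (inner_corners (Suc m) (Suc c # mu)) =
      (if c < m \<and> (mu = [] \<or> hd mu \<le> c) then x else 1) * w mu" for mu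
    by (auto simp: card_inner_corners_Cons w_def)
  have "corner_weight_eq x (Suc m) (Suc c) =
      (\<Sum>mu\<in>?A \<union> ?B. (if c < m \<and> (mu = [] \<or> hd mu \<le> c) then x else 1) * w mu)"
    unfolding corner_weight_eq_def first_row by (simp add: sum.reindex weight)
  also have "\<dots> = (\<Sum>mu\<in>?A. (if c < m then x else 1) * w mu) + (\<Sum>mu\<in>?B. w mu)"
    by (subst sum.union_disjoint) (auto intro: finite_subset[OF _ finite_fits_staircase] sum.cong)
  also have "\<dots> = (if c < m then x else 1) * corner_weight_le x m c + corner_weight_eq x m (Suc c)"
    by (simp add: corner_weight_le_def corner_weight_eq_def w_def sum_distrib_left)
  finally show ?thesis .
qed

interpretation corner_weight_grid: schroeder_grid "corner_weight_le 2"
proof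
  show "corner_weight_le 2 n 0 = 1" for n
    by (rule corner_weight_le_0)
  show "corner_weight_le 2 (Suc m) (Suc c) =
      corner_weight_le 2 (Suc m) c + corner_weight_le 2 m c + corner_weight_le 2 m (Suc c)"
    if "c < m" for c m
    using that by (simp add: corner_weight_le_Suc corner_weight_eq_Suc_Suc)
  show "corner_weight_le 2 (Suc m) (Suc m) = corner_weight_le 2 (Suc m) m + corner_weight_le 2 m m"
    for m
    by (simp add: corner_weight_le_Suc corner_weight_eq_Suc_Suc corner_weight_eq_beyond)
qed

lemma corner_weight_le_zero_Suc: "b \<le> m \<Longrightarrow> corner_weight_le 0 (Suc m) b = corner_weight_le 0 m b"
  by (induction b) (simp_all add: corner_weight_le_0 corner_weight_le_Suc corner_weight_eq_Suc_Suc)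

lemma corner_weight_le_zero_diag: "corner_weight_le 0 n n = 2 ^ n"
  by (induction n)
     (simp_all add: corner_weight_le_0 corner_weight_le_Suc corner_weight_eq_Suc_Suc
        corner_weight_le_zero_Suc corner_weight_eq_beyond)

lemma sum_power_card_inner_corners:
  "(\<Sum>lam | fits_staircase n lam. x ^ card (inner_corners n lam)) = (\<Sum>k = 0..n - 1. x ^ k * c_count n k)"
proof -
  have "(\<Sum>lam | fits_staircase n lam. x ^ card (inner_corners n lam)) =
      (\<Sum>k = 0..n - 1. \<Sum>lam \<in> {lam \<in> {lam. fits_staircase n lam}. card (inner_corners n lam) = k}.
        x ^ card (inner_corners n lam))"
    by (rule sum.group[symmetric]) (auto simp: finite_fits_staircase dest: card_inner_corners_le)
  also have "\<dots> = (\<Sum>k = 0..n - 1. x ^ k * c_count n k)"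
    by (intro sum.cong) (simp_all add: c_count_def inner_corners_def)
  finally show ?thesis .
qed

lemma c_count_0: "c_count n 0 = 2 ^ n"
proof -
  have "c_count n 0 = (\<Sum>k = 0..n - 1. 0 ^ k * c_count n k)"
    by (simp add: power_0_left if_distrib[of "\<lambda>u. u * _"] cong: if_cong)
  also have "\<dots> = corner_weight_le 0 n n"
    by (simp add: corner_weight_le_self sum_power_card_inner_corners)
  finally show ?thesis by (simp add: corner_weight_le_zero_diag)
qed

theorem corollary2p10:
  fixes n :: nat
  shows "schroeder n = 2 ^ n + (\<Sum>k = 1..n - 1. 2 ^ k * c_count n k)"
proof -
  have "schroeder n = corner_weight_le 2 n n"
    by (simp add: corner_weight_grid.diag_eq_schroeder)
  also have "\<dots> = (\<Sum>k = 0..n - 1. 2 ^ k * c_count n k)"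
    by (simp add: corner_weight_le_self sum_power_card_inner_corners)
  also have "\<dots> = c_count n 0 + (\<Sum>k = 1..n - 1. 2 ^ k * c_count n k)"
    by (simp add: sum.atLeast_Suc_atMost)
  finally show ?thesis by (simp add: c_count_0)
qed

end
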